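(* The class of axis-aligned rectangles over $\mathbb{R}^d$ has a lossless compression scheme of size at most $2d$ with respect to the query set consisting of the labeling oracle and the odd-one-out oracle $\mathcal{O}_{\text{odd}}$ (with the trivial inference rule).
   Context: Axis-aligned rectangles: indicator functions $h$ of $[a_1,b_1]\times\cdots\times[a_d,b_d]$ with $a_i\le b_i$, where $a_i=-\infty$ or $b_i=\infty$ is allowed (with the corresponding end open). The odd-one-out oracle on $h$ and $x\in\mathbb{R}^d$ returns $\{*\}$ if $h(x)=1$, and otherwise the set of pairs $(i,1)$ with $x_i>b_i$ and $(i,0)$ with $x_i<a_i$; an adversary returns one element of this set. For $S\subseteq\mathbb{R}^d$, $Q_h(S)$ is the set of all combinations of valid responses to all queries on points of $S$, and $q(S)|_W$ the restriction to $W\subseteq S$. A point $x$'s label is inferred by $q(S)$ if all rectangles consistent with $q(S)$ give $x$ the same label; $I(q(S))$ is the set of such points. A lossless compression scheme of size $k$: for every $h$, every $S$ on which $h$ is constant, and every $q(S)\in Q_h(S)$, there is $W\subseteq S$, $|W|\le k$, with $I(q(S))=I(q(S)|_W)$. *)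

theory Defs
  imports "HOL-Analysis.Analysis"
begin

text \<open>Points of R^d are functions from a finite index type 'd (with CARD('d) = d) to real. Infinite ends are automatically open,
  since a real coordinate never equals \<plusminus>\<infinity>.\<close>

definition is_rect :: "('d \<Rightarrow> ereal) \<Rightarrow> ('d \<Rightarrow> ereal) \<Rightarrow> bool" where
  "is_rect a b \<longleftrightarrow> (\<forall>i. a i \<noteq> \<infinity> \<and> b i \<noteq> -\<infinity> \<and> a i \<le> b i)"

definition rect_ind :: "('d \<Rightarrow> ereal) \<Rightarrow> ('d \<Rightarrow> ereal) \<Rightarrow> ('d \<Rightarrow> real) \<Rightarrow> bool" where
  "rect_ind a b x \<longleftrightarrow> (\<forall>i. a i \<le> ereal (x i) \<and> ereal (x i) \<le> b i)"

text \<open>Odd-one-out responses: Star, or Out i True for (i,1) (x_i > b_i),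
  Out i False for (i,0) (x_i < a_i).\<close>
datatype 'd resp = Star | Out 'd bool

definition odd_set :: "('d \<Rightarrow> ereal) \<Rightarrow> ('d \<Rightarrow> ereal) \<Rightarrow> ('d \<Rightarrow> real) \<Rightarrow> 'd resp set" where
  "odd_set a b x = (if rect_ind a b x then {Star}
     else {Out i True | i. b i < ereal (x i)} \<union> {Out i False | i. ereal (x i) < a i})"

text \<open>A response to both queries (labeling oracle, odd-one-out oracle) at each point:
  a function q assigning to each point a pair (label, odd-one-out answer).
  q is consistent with the rectangle (a,b) on W if all answers on W are valid for it.\<close>
definition consistent ::
  "(('d \<Rightarrow> real) \<Rightarrow> bool \<times> 'd resp) \<Rightarrow> ('d \<Rightarrow> real) set \<Rightarrow> ('d \<Rightarrow> ereal) \<Rightarrow> ('d \<Rightarrow> ereal) \<Rightarrow> bool" where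
  "consistent q W a b \<longleftrightarrow> is_rect a b \<and>
     (\<forall>x\<in>W. fst (q x) = rect_ind a b x \<and> snd (q x) \<in> odd_set a b x)"

definition inferred ::
  "(('d \<Rightarrow> real) \<Rightarrow> bool \<times> 'd resp) \<Rightarrow> ('d \<Rightarrow> real) set \<Rightarrow> ('d \<Rightarrow> real) set" where
  "inferred q W = {x. \<forall>a b a' b'. consistent q W a b \<and> consistent q W a' b'
       \<longrightarrow> rect_ind a b x = rect_ind a' b' x}"

end

theory Submission
  imports Defs
begin

text \<open>Keep, for each of the 2d signed coordinates, one extreme point of S. If S consists of
  positive points, a consistent rectangle containing the minimiser and the maximiser of every
  coordinate contains all of S. If S consists of negative points, group them by their
  odd-one-out answer (i,1) or (i,0) and keep the point of the group closest to the rectangle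
  in coordinate i: a rectangle that puts it beyond b i (resp. a i) puts the whole group there.
  Either way every rectangle consistent with the kept answers is consistent with all answers,
  so both sets of answers infer the same labels.\<close>

lemma obtain_minimisers_card_le:
  fixes C :: "'k::finite \<Rightarrow> 'a set" and f :: "'k \<Rightarrow> 'a \<Rightarrow> 'b::linorder"
  assumes "finite S" and "\<And>k. C k \<subseteq> S"
  obtains W where "W \<subseteq> S" and "card W \<le> CARD('k)"
    and "\<And>k. C k \<noteq> {} \<Longrightarrow> \<exists>m\<in>W \<inter> C k. \<forall>y\<in>C k. f k m \<le> f k y"
proof
  define g where "g k = arg_min_on (f k) (C k)" for k
  let ?W = "g ` {k. C k \<noteq> {}}"
  have fin: "finite (C k)" for k
    using assms finite_subset by blast
  show "?W \<subseteq> S"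
    using arg_min_if_finite(1)[OF fin] assms(2) by (auto simp: g_def)
  have "card ?W \<le> card {k. C k \<noteq> {}}"
    by (rule card_image_le) simp
  also have "\<dots> \<le> CARD('k)"
    by (rule card_mono) auto
  finally show "card ?W \<le> CARD('k)" .
  show "\<exists>m\<in>?W \<inter> C k. \<forall>y\<in>C k. f k m \<le> f k y" if "C k \<noteq> {}" for k
  proof
    show "g k \<in> ?W \<inter> C k"
      using that arg_min_if_finite(1)[OF fin] by (auto simp: g_def)
    show "\<forall>y\<in>C k. f k (g k) \<le> f k y"
      unfolding g_def using arg_min_least[OF fin that] by blast
  qed
qed

definition signed_coord :: "'d \<times> bool \<Rightarrow> ('d \<Rightarrow> real) \<Rightarrow> real" where
  "signed_coord = (\<lambda>(i, t) x. if t then x i else - x i)"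

lemma consistent_subset: "consistent q S a b \<Longrightarrow> W \<subseteq> S \<Longrightarrow> consistent q W a b"
  unfolding consistent_def by blast

lemma inferred_eq_if_consistent_extends:
  assumes "W \<subseteq> S" and "\<And>a b. consistent q W a b \<Longrightarrow> consistent q S a b"
  shows "inferred q S = inferred q W"
proof -
  have "consistent q W a b = consistent q S a b" for a b
    using assms consistent_subset by blast
  then show ?thesis
    unfolding inferred_def by simp
qed

lemma rect_ind_if_coordinatewise_between:
  assumes "\<And>i. \<exists>l u. rect_ind a b l \<and> rect_ind a b u \<and> l i \<le> x i \<and> x i \<le> u i"
  shows "rect_ind a b x"
  unfolding rect_ind_def
proof
  fix i
  obtain l u where "rect_ind a b l" "rect_ind a b u" "l i \<le> x i" "x i \<le> u i"
    using assms by blast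
  then show "a i \<le> ereal (x i) \<and> ereal (x i) \<le> b i"
    unfolding rect_ind_def by (meson ereal_less_eq(3) order_trans)
qed

lemma Out_in_odd_set_iff:
  "Out i t \<in> odd_set a b x \<longleftrightarrow> (if t then b i < ereal (x i) else ereal (x i) < a i)"
proof (cases "rect_ind a b x")
  case True
  then have "ereal (x i) \<le> b i" and "a i \<le> ereal (x i)"
    unfolding rect_ind_def by simp_all
  with True show ?thesis
    by (auto simp: odd_set_def not_less)
qed (auto simp: odd_set_def)

lemma odd_set_inside: "rect_ind a b x \<Longrightarrow> odd_set a b x = {Star}"
  by (simp add: odd_set_def)

lemma Star_notin_odd_set_outside: "\<not> rect_ind a b x \<Longrightarrow> Star \<notin> odd_set a b x"
  by (auto simp: odd_set_def)

lemma not_rect_ind_if_Out_in_odd_set: "Out i t \<in> odd_set a b x \<Longrightarrow> \<not> rect_ind a b x"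
  by (auto simp: odd_set_def)

lemma Out_in_odd_set_beyond:
  assumes "Out i t \<in> odd_set a b m" and "signed_coord (i, t) m \<le> signed_coord (i, t) x"
  shows "Out i t \<in> odd_set a b x"
proof (cases t)
  case True
  then have "b i < ereal (m i)" and "m i \<le> x i"
    using assms by (simp_all add: Out_in_odd_set_iff signed_coord_def)
  then show ?thesis
    using True by (simp add: Out_in_odd_set_iff) (meson ereal_less_eq(3) less_le_trans)
next
  case False
  then have "ereal (m i) < a i" and "x i \<le> m i"
    using assms by (simp_all add: Out_in_odd_set_iff signed_coord_def)
  then show ?thesis
    using False by (simp add: Out_in_odd_set_iff) (meson ereal_less_eq(3) le_less_trans)
qed

lemma compress_positive_answers:
  fixes q :: "('d::finite \<Rightarrow> real) \<Rightarrow> bool \<times> 'd resp"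
  assumes "finite S" and pos: "\<And>x. x \<in> S \<Longrightarrow> q x = (True, Star)"
  obtains W where "W \<subseteq> S" and "card W \<le> CARD('d \<times> bool)"
    and "\<And>a b. consistent q W a b \<Longrightarrow> consistent q S a b"
proof -
  obtain W where W: "W \<subseteq> S" "card W \<le> CARD('d \<times> bool)"
    and extreme: "\<And>k. S \<noteq> {} \<Longrightarrow> \<exists>m\<in>W \<inter> S. \<forall>y\<in>S. signed_coord k m \<le> signed_coord k y"
    using obtain_minimisers_card_le[of S "\<lambda>_. S" signed_coord] \<open>finite S\<close> by blast
  have "consistent q S a b" if c: "consistent q W a b" for a b
  proof -
    have inW: "rect_ind a b m" if "m \<in> W" for m
      using c pos W(1) that unfolding consistent_def by force
    have "rect_ind a b x" if "x \<in> S" for x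
    proof (rule rect_ind_if_coordinatewise_between)
      fix i
      obtain u where "u \<in> W" "- u i \<le> - x i"
        using extreme[of "(i, False)"] \<open>x \<in> S\<close> by (auto simp: signed_coord_def)
      moreover obtain l where "l \<in> W" "l i \<le> x i"
        using extreme[of "(i, True)"] \<open>x \<in> S\<close> by (auto simp: signed_coord_def)
      ultimately show "\<exists>l u. rect_ind a b l \<and> rect_ind a b u \<and> l i \<le> x i \<and> x i \<le> u i"
        using inW by force
    qed
    then show ?thesis
      using c pos unfolding consistent_def by (auto simp: odd_set_def)
  qed
  then show ?thesis
    using that W by blast
qed

lemma compress_negative_answers:
  fixes q :: "('d::finite \<Rightarrow> real) \<Rightarrow> bool \<times> 'd resp"
  assumes "finite S" and neg: "\<And>x. x \<in> S \<Longrightarrow> \<not> fst (q x) \<and> snd (q x) \<noteq> Star"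
  obtains W where "W \<subseteq> S" and "card W \<le> CARD('d \<times> bool)"
    and "\<And>a b. consistent q W a b \<Longrightarrow> consistent q S a b"
proof -
  define C where "C k = {x \<in> S. snd (q x) = Out (fst k) (snd k)}" for k :: "'d \<times> bool"
  have "C k \<subseteq> S" for k
    by (auto simp: C_def)
  then obtain W where W: "W \<subseteq> S" "card W \<le> CARD('d \<times> bool)"
    and closest: "\<And>k. C k \<noteq> {} \<Longrightarrow> \<exists>m\<in>W \<inter> C k. \<forall>y\<in>C k. signed_coord k m \<le> signed_coord k y"
    using obtain_minimisers_card_le[of S C signed_coord] \<open>finite S\<close> by blast
  have "consistent q S a b" if c: "consistent q W a b" for a b
  proof -
    have "fst (q x) = rect_ind a b x \<and> snd (q x) \<in> odd_set a b x" if "x \<in> S" for x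
    proof -
      obtain i t where it: "snd (q x) = Out i t"
        using neg[OF \<open>x \<in> S\<close>] by (cases "snd (q x)") auto
      then have "x \<in> C (i, t)"
        using \<open>x \<in> S\<close> by (simp add: C_def)
      then obtain m where "m \<in> W" "m \<in> C (i, t)"
        and "signed_coord (i, t) m \<le> signed_coord (i, t) x"
        using closest[of "(i, t)"] by blast
      have "snd (q m) \<in> odd_set a b m"
        using c \<open>m \<in> W\<close> unfolding consistent_def by blast
      moreover have "snd (q m) = Out i t"
        using \<open>m \<in> C (i, t)\<close> by (simp add: C_def)
      ultimately have out: "Out i t \<in> odd_set a b x"
        using Out_in_odd_set_beyond \<open>signed_coord (i, t) m \<le> signed_coord (i, t) x\<close> by simp
      then have "\<not> rect_ind a b x"
        by (rule not_rect_ind_if_Out_in_odd_set)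
      then show ?thesis
        using out it neg[OF \<open>x \<in> S\<close>] by simp
    qed
    then show ?thesis
      using c unfolding consistent_def by blast
  qed
  then show ?thesis
    using that W by blast
qed

theorem proposition4p1:
  fixes a b :: "'d::finite \<Rightarrow> ereal"
    and S :: "('d \<Rightarrow> real) set"
    and q :: "('d \<Rightarrow> real) \<Rightarrow> bool \<times> 'd resp"
  assumes "is_rect a b"
    and "finite S"
    and "\<forall>x\<in>S. \<forall>y\<in>S. rect_ind a b x = rect_ind a b y"
    and "\<forall>x\<in>S. fst (q x) = rect_ind a b x \<and> snd (q x) \<in> odd_set a b x"
  shows "\<exists>W\<subseteq>S. card W \<le> 2 * CARD('d) \<and> inferred q S = inferred q W"
proof -
  obtain W where W: "W \<subseteq> S" "card W \<le> CARD('d \<times> bool)"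
    and extends: "\<And>a' b'. consistent q W a' b' \<Longrightarrow> consistent q S a' b'"
  proof (cases "\<exists>x\<in>S. rect_ind a b x")
    case True
    then have "q x = (True, Star)" if "x \<in> S" for x
      using assms(3) assms(4)[rule_format, OF that] odd_set_inside that
      by (metis prod.collapse singletonD)
    then show ?thesis
      using compress_positive_answers[OF assms(2)] that by blast
  next
    case False
    then have "\<not> fst (q x) \<and> snd (q x) \<noteq> Star" if "x \<in> S" for x
      using assms(4)[rule_format, OF that] Star_notin_odd_set_outside that by metis
    then show ?thesis
      using compress_negative_answers[OF assms(2)] that by blast
  qed
  have "inferred q S = inferred q W"
    using W(1) extends by (rule inferred_eq_if_consistent_extends)
  moreover have "card W \<le> 2 * CARD('d)"
    using W(2) by simp
  ultimately show ?thesis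
    using W(1) by blast
qed

end
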